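(* Let $n\ge1$, $1\le k\le n+1$ and $0<p<\frac{2(n+1+k)}{k(n+k-1)}$. For $i=1,\dots,k$ let $S_i\subset\mathbb S^n$ be a (relatively open) neighborhood of $e_i$ in the unit sphere, small enough to be parametrized as $S_i=\Sigma_i(U_i)$ with $U_i\subset\{\zeta\in\mathbb R^{n+1}:\zeta_i=0\}\cong\mathbb R^n$ an open neighborhood of $0$ and $$\Sigma_i(\zeta_1,\dots,\widehat{\zeta_i},\dots,\zeta_{n+1})=\Big(\zeta_1,\dots,\zeta_{i-1},\sqrt{1-\textstyle\sum_{j\ne i}\zeta_j^2},\zeta_{i+1},\dots,\zeta_{n+1}\Big).$$ Then there is no constant $C<\infty$ such that $$\Big\|\prod_{i=1}^k\mathcal E_if_i\Big\|_{L^p(\mathbb R^{n+1})}\le C\prod_{i=1}^k\|f_i\|_{L^2(U_i)}\quad\text{for all }f_i\in L^2(U_i).$$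
   Context: $e_i\in\mathbb R^{n+1}$ is the $i$-th standard unit vector, $\mathbb S^n$ the unit sphere in $\mathbb R^{n+1}$, $\widehat{\zeta_i}$ denotes omission of the $i$-th coordinate, and $\mathcal E_if(x)=\int_{U_i}e^{ix\cdot\Sigma_i(\xi)}f(\xi)\,d\xi$ for $x\in\mathbb R^{n+1}$. *)

theory Defs
  imports "HOL-Analysis.Analysis"
begin

text \<open>Points of R^(n+1) are vectors of type real^'n with CARD('n) = n+1.
  The coordinate hyperplane {zeta. zeta$i = 0} is identified with R^n.\<close>

definition hyperplane :: "'n::finite \<Rightarrow> (real^'n) set" where
  "hyperplane i = {\<zeta>. \<zeta>$i = 0}"

definition coord_zero :: "'n::finite \<Rightarrow> real^'n \<Rightarrow> real^'n" where
  "coord_zero i x = (\<chi> j. if j = i then 0 else x$j)"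

text \<open>n-dimensional Lebesgue measure on the hyperplane {zeta_i = 0}: push forward of
  Lebesgue measure restricted to the slab 0 <= x_i <= 1 (thickness one) under the
  projection setting the i-th coordinate to 0 (equal to Lebesgue measure on the
  hyperplane by Fubini).\<close>

definition hyperplane_measure :: "'n::finite \<Rightarrow> (real^'n) measure" where
  "hyperplane_measure i =
     distr (density lborel (indicator {x. 0 \<le> x$i \<and> x$i \<le> 1})) borel (coord_zero i)"

definition sphere_chart :: "'n::finite \<Rightarrow> real^'n \<Rightarrow> real^'n" where
  "sphere_chart i \<zeta> =
     (\<chi> j. if j = i then sqrt (1 - (\<Sum>l\<in>UNIV - {i}. (\<zeta>$l)^2)) else \<zeta>$j)"

definition extension_op ::
  "'n::finite \<Rightarrow> (real^'n) set \<Rightarrow> (real^'n \<Rightarrow> complex) \<Rightarrow> real^'n \<Rightarrow> complex" where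
  "extension_op i U f x =
     set_lebesgue_integral (hyperplane_measure i) U
       (\<lambda>\<xi>. exp (\<i> * complex_of_real (x \<bullet> sphere_chart i \<xi>)) * f \<xi>)"

definition in_L2 :: "'n::finite \<Rightarrow> (real^'n) set \<Rightarrow> (real^'n \<Rightarrow> complex) \<Rightarrow> bool" where
  "in_L2 i U f \<longleftrightarrow>
     set_borel_measurable (hyperplane_measure i) U f \<and>
     set_integrable (hyperplane_measure i) U (\<lambda>\<xi>. (norm (f \<xi>))^2)"

definition L2_norm_on :: "'n::finite \<Rightarrow> (real^'n) set \<Rightarrow> (real^'n \<Rightarrow> complex) \<Rightarrow> real" where
  "L2_norm_on i U f =
     sqrt (set_lebesgue_integral (hyperplane_measure i) U (\<lambda>\<xi>. (norm (f \<xi>))^2))"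

end

theory Submission
  imports Defs
begin

text \<open>A Knapp example. Write N = n + 1 and k = card K. For small \<delta> > 0 let f_i be the indicator
  of the box in the hyperplane {\<zeta>_i = 0} with side \<delta>^2 in the directions e_j, j \<in> K, and side \<delta>
  in the others; its measure is m = 2^(N-1) \<delta>^(N+k-2). On this box the phase x \<bullet> \<Sigma>_i(\<xi>) - x_i
  stays in [-1, 1] for all x in the dual box {x. |x_j| a_j \<le> 1/(2N)}, a_j the side lengths, whose volume is
  N^(-N) \<delta>^(-(N+k)). There the real part of the integrand is at least 1/2, so |E_i f_i| \<ge> m/2.
  Thus the left-hand side is at least (m/2)^(kp) N^(-N) \<delta>^(-(N+k)), while the right-hand side is
  C^p m^(kp/2). Since p < 2(N+k)/(k(N+k-2)), the ratio of the two blows up as \<delta> \<rightarrow> 0.\<close>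

lemma abs_sqrt_one_minus_sub_one_le:
  fixes s :: real
  assumes "0 \<le> s" "s \<le> 1"
  shows "\<bar>sqrt (1 - s) - 1\<bar> \<le> s"
proof -
  have le1: "sqrt (1 - s) \<le> 1" using assms by simp
  have "1 - s = sqrt (1 - s) * sqrt (1 - s)" using assms by simp
  also have "\<dots> \<le> sqrt (1 - s)" using le1 assms by (intro mult_left_le) auto
  finally show ?thesis using le1 by linarith
qed

lemma cos_ge_half: "\<bar>t::real\<bar> \<le> 1 \<Longrightarrow> 1/2 \<le> cos t"
proof -
  assume "\<bar>t\<bar> \<le> 1"
  moreover have "1 \<le> pi / 3" using pi_gt3 by simp
  ultimately have "cos (pi/3) \<le> cos \<bar>t\<bar>" by (intro cos_monotone_0_pi_le) auto
  then show ?thesis by (simp add: cos_60)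
qed

lemma nonpos_if_le_mult_powr_near_zero:
  fixes \<alpha> \<beta> e \<eta> :: real
  assumes "0 < e" "0 < \<eta>" and bound: "\<And>\<delta>. 0 < \<delta> \<Longrightarrow> \<delta> < \<eta> \<Longrightarrow> \<alpha> \<le> \<beta> * \<delta> powr e"
  shows "\<alpha> \<le> 0"
proof (rule ccontr)
  assume "\<not> \<alpha> \<le> 0"
  define t where "t = \<alpha> / (\<bar>\<beta>\<bar> + 1)"
  define \<delta> where "\<delta> = min (\<eta>/2) (t powr (1/e))"
  have t: "0 < t" "\<bar>\<beta>\<bar> * t < \<alpha>"
    using \<open>\<not> \<alpha> \<le> 0\<close> by (auto simp: t_def field_simps)
  have \<delta>: "0 < \<delta>" "\<delta> < \<eta>" using assms t unfolding \<delta>_def by auto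
  have "\<delta> powr e \<le> (t powr (1/e)) powr e"
    using assms \<delta> unfolding \<delta>_def by (intro powr_mono2) auto
  also have "\<dots> = t" using assms t by (simp add: powr_powr)
  finally have "\<beta> * \<delta> powr e \<le> \<bar>\<beta>\<bar> * t"
    by (metis abs_ge_self abs_ge_zero mult_mono powr_ge_zero)
  with bound[OF \<delta>] t show False by linarith
qed

lemma uniform_ball_in_openin:
  fixes U S :: "'i \<Rightarrow> 'a::metric_space set"
  assumes "finite K" "\<And>i. i \<in> K \<Longrightarrow> openin (top_of_set (S i)) (U i)" "\<And>i. i \<in> K \<Longrightarrow> c \<in> U i"
  obtains r where "0 < r" "r \<le> 1" "\<And>i. i \<in> K \<Longrightarrow> ball c r \<inter> S i \<subseteq> U i"
proof -
  have "\<forall>i\<in>K. \<exists>e>0. ball c e \<inter> S i \<subseteq> U i"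
    using assms(2,3) by (auto simp: openin_contains_ball)
  then obtain e where e: "\<And>i. i \<in> K \<Longrightarrow> 0 < e i \<and> ball c (e i) \<inter> S i \<subseteq> U i"
    by metis
  define r where "r = Min (insert 1 (e ` K))"
  have "0 < r" unfolding r_def using e assms(1) by (subst Min_gr_iff) auto
  moreover have "r \<le> 1" "\<And>i. i \<in> K \<Longrightarrow> r \<le> e i"
    unfolding r_def using assms(1) by (auto intro: Min_le)
  ultimately show ?thesis
    using e by (intro that[of r]) (auto dest!: subset_ball[of r] intro: order.trans[rotated])
qed

lemma abs_le_box_eq_cbox:
  "{x::real^'n::finite. \<forall>j. \<bar>x$j\<bar> \<le> w j} = cbox (\<chi> j. - w j) (vec_lambda w)"
proof -
  have "\<bar>t\<bar> \<le> c \<longleftrightarrow> - c \<le> t \<and> t \<le> c" for t c :: real by arith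
  then show ?thesis by (simp add: mem_box_cart set_eq_iff)
qed

lemma emeasure_lborel_abs_le_box:
  fixes w :: "'n::finite \<Rightarrow> real"
  assumes "\<And>j. 0 \<le> w j"
  shows "emeasure lborel {x::real^'n. \<forall>j. \<bar>x$j\<bar> \<le> w j} = ennreal (\<Prod>j\<in>UNIV. 2 * w j)"
proof -
  have "emeasure lborel (cbox (\<chi> j. - w j) (vec_lambda w))
      = ennreal (measure lborel (cbox (\<chi> j. - w j) (vec_lambda w)))"
    using emeasure_lborel_cbox_finite by (intro emeasure_eq_ennreal_measure) (simp add: less_top[symmetric])
  also have "measure lborel (cbox (\<chi> j. - w j) (vec_lambda w)) = (\<Prod>j\<in>UNIV. w j - - w j)"
  proof (rule content_cbox_cart[THEN trans])
    have "vec_lambda w \<in> cbox (\<chi> j. - w j) (vec_lambda w)"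
      using assms by (auto simp: mem_box_cart intro: order.trans[of _ 0])
    then show "cbox (\<chi> j. - w j) (vec_lambda w) \<noteq> {}" by auto
  qed simp
  finally show ?thesis unfolding abs_le_box_eq_cbox by simp
qed

lemma sets_hyperplane_measure [simp]: "sets (hyperplane_measure i) = sets borel"
  and space_hyperplane_measure [simp]: "space (hyperplane_measure i) = UNIV"
  unfolding hyperplane_measure_def by simp_all

lemma borel_measurable_hyperplane_measure [simp]:
  "borel_measurable (hyperplane_measure i) = borel_measurable borel"
  by (rule measurable_cong_sets) simp_all

lemma borel_measurable_coord_zero: "coord_zero (i::'n::finite) \<in> borel_measurable borel"
proof -
  have "continuous_on UNIV (\<lambda>x::real^'n. if j = i then 0 else x$j)" for j
    by (cases "j = i") (auto intro!: continuous_intros)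
  then have "continuous_on UNIV (coord_zero i)"
    unfolding coord_zero_def by (rule continuous_on_vec_lambda)
  then show ?thesis by (rule borel_measurable_continuous_onI)
qed

definition hyperplane_box :: "'n::finite \<Rightarrow> ('n \<Rightarrow> real) \<Rightarrow> (real^'n) set" where
  "hyperplane_box i a = {\<zeta>. \<zeta>$i = 0 \<and> (\<forall>j. j \<noteq> i \<longrightarrow> \<bar>\<zeta>$j\<bar> \<le> a j)}"

lemma closed_hyperplane_box: "closed (hyperplane_box (i::'n::finite) a)"
proof -
  have "hyperplane_box i a = {\<zeta>. \<zeta>$i = 0} \<inter> (\<Inter>j\<in>UNIV-{i}. {\<zeta>. \<bar>\<zeta>$j\<bar> \<le> a j})"
    unfolding hyperplane_box_def by auto
  then show ?thesis
    by (auto intro!: closed_Int closed_INT closed_Collect_eq closed_Collect_le continuous_intros)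
qed

lemma hyperplane_box_sets [measurable]: "hyperplane_box i a \<in> sets borel"
  using closed_hyperplane_box by (rule borel_closed)

lemma emeasure_hyperplane_box:
  fixes i :: "'n::finite"
  assumes "\<And>j. a j \<ge> 0"
  shows "emeasure (hyperplane_measure i) (hyperplane_box i a) = ennreal (\<Prod>j\<in>UNIV-{i}. 2 * a j)"
proof -
  define l :: "real^'n" where "l = (\<chi> j. if j = i then 0 else - a j)"
  define u :: "real^'n" where "u = (\<chi> j. if j = i then 1 else a j)"
  define slab where "slab = {x::real^'n. 0 \<le> x$i \<and> x$i \<le> 1}"
  have slab_box: "slab \<inter> coord_zero i -` hyperplane_box i a = cbox l u"
  proof (rule set_eqI)
    fix x :: "real^'n"
    have "x \<in> cbox l u \<longleftrightarrow> (\<forall>j. l$j \<le> x$j \<and> x$j \<le> u$j)" by (rule mem_box_cart)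
    also have "\<dots> \<longleftrightarrow> x \<in> slab \<and> (\<forall>j. j \<noteq> i \<longrightarrow> \<bar>x$j\<bar> \<le> a j)"
      unfolding l_def u_def slab_def by (auto simp: abs_le_iff) (metis minus_le_iff)+
    finally show "x \<in> slab \<inter> coord_zero i -` hyperplane_box i a \<longleftrightarrow> x \<in> cbox l u"
      unfolding hyperplane_box_def coord_zero_def by auto
  qed
  have slab: "slab \<in> sets borel"
    unfolding slab_def
    by (intro borel_closed closed_Collect_conj closed_Collect_le) (auto intro!: continuous_intros)
  have "emeasure (hyperplane_measure i) (hyperplane_box i a)
      = emeasure (density lborel (indicator slab)) (coord_zero i -` hyperplane_box i a)"
    unfolding hyperplane_measure_def slab_def
    by (simp add: emeasure_distr borel_measurable_coord_zero)
  also have "\<dots> = (\<integral>\<^sup>+ x. indicator (slab \<inter> coord_zero i -` hyperplane_box i a) x \<partial>lborel)"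
    using slab measurable_sets_borel[OF borel_measurable_coord_zero hyperplane_box_sets]
    by (subst emeasure_density) (auto intro!: nn_integral_cong simp: indicator_def)
  also have "\<dots> = emeasure lborel (cbox l u)"
    unfolding slab_box by simp
  also have "\<dots> = ennreal (measure lborel (cbox l u))"
    using emeasure_lborel_cbox_finite[of l u] by (intro emeasure_eq_ennreal_measure) simp
  also have "measure lborel (cbox l u) = (\<Prod>j\<in>UNIV. u$j - l$j)"
  proof (rule content_cbox_cart)
    have "l \<in> cbox l u" using assms unfolding l_def u_def by (auto simp: mem_box_cart)
    then show "cbox l u \<noteq> {}" by auto
  qed
  also have "(\<Prod>j\<in>UNIV. u$j - l$j) = (\<Prod>j\<in>UNIV-{i}. 2 * a j)"
    by (auto simp: prod.remove[of UNIV i] l_def u_def intro!: prod.cong)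
  finally show ?thesis .
qed

lemma measure_hyperplane_box:
  fixes i :: "'n::finite"
  assumes "\<And>j. a j \<ge> 0"
  shows "measure (hyperplane_measure i) (hyperplane_box i a) = (\<Prod>j\<in>UNIV-{i}. 2 * a j)"
  using emeasure_hyperplane_box[where a=a, OF assms] assms by (simp add: measure_def prod_nonneg)

lemma
  fixes i :: "'n::finite"
  assumes a: "\<And>j. a j \<ge> 0" and box_U: "hyperplane_box i a \<subseteq> U"
  shows in_L2_indicator_hyperplane_box: "in_L2 i U (indicator (hyperplane_box i a))"
    and L2_norm_on_indicator_hyperplane_box:
      "L2_norm_on i U (indicator (hyperplane_box i a)) = sqrt (\<Prod>j\<in>UNIV-{i}. 2 * a j)"
proof -
  have restrict: "(\<lambda>x. indicator U x *\<^sub>R (indicator (hyperplane_box i a) x :: complex))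
      = indicator (hyperplane_box i a)"
    "(\<lambda>x. indicator U x *\<^sub>R (norm (indicator (hyperplane_box i a) x :: complex))^2)
      = (indicator (hyperplane_box i a) :: _ \<Rightarrow> real)"
    using box_U by (auto simp: indicator_def fun_eq_iff)
  show "in_L2 i U (indicator (hyperplane_box i a))"
    unfolding in_L2_def set_borel_measurable_def set_integrable_def restrict
    using emeasure_hyperplane_box[where a=a, OF a] by (auto simp: integrable_indicator_iff intro!: borel_measurable_indicator)
  show "L2_norm_on i U (indicator (hyperplane_box i a)) = sqrt (\<Prod>j\<in>UNIV-{i}. 2 * a j)"
    unfolding L2_norm_on_def set_lebesgue_integral_def restrict
    using measure_hyperplane_box[where a=a, OF a] by simp
qed

text \<open>x \<bullet> sphere_chart i \<xi> minus x$i; the factor exp (\<i> x$i) it leaves out has modulus one.\<close>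

definition sphere_phase :: "'n::finite \<Rightarrow> real^'n \<Rightarrow> real^'n \<Rightarrow> real" where
  "sphere_phase i x \<xi> =
     (\<Sum>j\<in>UNIV-{i}. x$j * \<xi>$j) + x$i * (sqrt (1 - (\<Sum>l\<in>UNIV-{i}. (\<xi>$l)^2)) - 1)"

lemma inner_sphere_chart: "x \<bullet> sphere_chart i \<xi> = x$i + sphere_phase i x \<xi>"
proof -
  have "x \<bullet> sphere_chart i \<xi> = x$i * sphere_chart i \<xi> $ i + (\<Sum>j\<in>UNIV-{i}. x$j * sphere_chart i \<xi> $ j)"
    unfolding inner_vec_def by (simp add: sum.remove[of UNIV i])
  also have "(\<Sum>j\<in>UNIV-{i}. x$j * sphere_chart i \<xi> $ j) = (\<Sum>j\<in>UNIV-{i}. x$j * \<xi>$j)"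
    by (intro sum.cong) (auto simp: sphere_chart_def)
  finally show ?thesis by (simp add: sphere_chart_def sphere_phase_def algebra_simps)
qed

lemma abs_sphere_phase_le:
  fixes i :: "'n::finite"
  assumes \<xi>: "\<xi> \<in> hyperplane_box i a"
    and sum_sq: "(\<Sum>l\<in>UNIV-{i}. (a l)^2) \<le> 1"
  shows "\<bar>sphere_phase i x \<xi>\<bar> \<le> (\<Sum>j\<in>UNIV-{i}. \<bar>x$j\<bar> * a j) + \<bar>x$i\<bar> * (\<Sum>l\<in>UNIV-{i}. (a l)^2)"
proof -
  have \<xi>a: "\<bar>\<xi>$j\<bar> \<le> a j" if "j \<in> UNIV-{i}" for j using \<xi> that unfolding hyperplane_box_def by auto
  define s where "s = (\<Sum>l\<in>UNIV-{i}. (\<xi>$l)^2)"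
  have "s \<le> (\<Sum>l\<in>UNIV-{i}. (a l)^2)"
    unfolding s_def using \<xi>a by (intro sum_mono) (metis abs_ge_zero power2_abs power_mono)
  moreover have "0 \<le> s" unfolding s_def by (intro sum_nonneg) auto
  ultimately have "\<bar>x$i * (sqrt (1 - s) - 1)\<bar> \<le> \<bar>x$i\<bar> * (\<Sum>l\<in>UNIV-{i}. (a l)^2)"
    using sum_sq abs_sqrt_one_minus_sub_one_le[of s] unfolding abs_mult
    by (intro mult_left_mono) auto
  moreover have "\<bar>\<Sum>j\<in>UNIV-{i}. x$j * \<xi>$j\<bar> \<le> (\<Sum>j\<in>UNIV-{i}. \<bar>x$j\<bar> * a j)"
    using \<xi>a by (intro order.trans[OF sum_abs] sum_mono) (auto simp: abs_mult intro: mult_left_mono)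
  ultimately show ?thesis unfolding sphere_phase_def s_def by linarith
qed

lemma norm_extension_op_indicator_hyperplane_box_ge:
  fixes i :: "'n::finite" and x :: "real^'n"
  assumes a: "\<And>j. a j \<ge> 0" and box_U: "hyperplane_box i a \<subseteq> U"
    and phase: "\<And>\<xi>. \<xi> \<in> hyperplane_box i a \<Longrightarrow> \<bar>sphere_phase i x \<xi>\<bar> \<le> 1"
  shows "(\<Prod>j\<in>UNIV-{i}. 2 * a j) / 2 \<le> norm (extension_op i U (indicator (hyperplane_box i a)) x)"
proof -
  define M where "M = hyperplane_measure i"
  define Q where "Q = hyperplane_box i a"
  define h where "h \<xi> = indicator Q \<xi> * exp (\<i> * complex_of_real (sphere_phase i x \<xi>))" for \<xi>
  have Q_int: "integrable M (indicator Q :: _ \<Rightarrow> real)"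
    using emeasure_hyperplane_box[where a=a, OF a] unfolding M_def Q_def
    by (simp add: integrable_indicator_iff)
  have "continuous_on UNIV (\<lambda>\<xi>. exp (\<i> * complex_of_real (sphere_phase i x \<xi>)))"
    unfolding sphere_phase_def by (intro continuous_intros)
  then have "h \<in> borel_measurable M"
    unfolding h_def M_def Q_def borel_measurable_hyperplane_measure
    by (intro borel_measurable_times borel_measurable_indicator borel_measurable_continuous_onI) auto
  then have h_int: "integrable M h"
    by (rule Bochner_Integration.integrable_bound[OF Q_int]) (auto simp: h_def indicator_def norm_mult)
  have "extension_op i U (indicator Q) x = integral\<^sup>L M (\<lambda>\<xi>. exp (\<i> * complex_of_real (x$i)) * h \<xi>)"
    unfolding extension_op_def set_lebesgue_integral_def M_def[symmetric]
      inner_sphere_chart distrib_left of_real_add exp_add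
    using box_U by (intro Bochner_Integration.integral_cong) (auto simp: h_def Q_def indicator_def)
  then have "Re (integral\<^sup>L M h) \<le> norm (extension_op i U (indicator Q) x)"
    by (simp add: norm_mult complex_Re_le_cmod)
  moreover have "integral\<^sup>L M (\<lambda>\<xi>. indicator Q \<xi> / 2) \<le> Re (integral\<^sup>L M h)"
    unfolding integral_Re[OF h_int, symmetric]
  proof (rule integral_mono)
    fix \<xi>
    show "indicator Q \<xi> / 2 \<le> Re (h \<xi>)"
      using cos_ge_half[OF phase] by (cases "\<xi> \<in> Q") (auto simp: h_def Q_def Re_exp)
  qed (use Q_int h_int in simp_all)
  moreover have "integral\<^sup>L M (\<lambda>\<xi>. indicator Q \<xi> / 2) = (\<Prod>j\<in>UNIV-{i}. 2 * a j) / 2"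
    using measure_hyperplane_box[where a=a, OF a] unfolding M_def Q_def by simp
  ultimately show ?thesis unfolding Q_def by linarith
qed

lemma hyperplane_box_subset_ball:
  fixes i :: "'n::finite"
  assumes "0 \<le> \<delta>" "\<And>j. a j \<le> \<delta>" "real CARD('n) * \<delta> < r"
  shows "hyperplane_box i a \<subseteq> ball 0 r \<inter> hyperplane i"
proof
  fix \<zeta> assume \<zeta>: "\<zeta> \<in> hyperplane_box i a"
  have "norm \<zeta> \<le> (\<Sum>j\<in>UNIV. \<bar>\<zeta>$j\<bar>)" by (rule norm_le_l1_cart)
  also have "\<dots> \<le> (\<Sum>j\<in>(UNIV::'n set). \<delta>)"
  proof (rule sum_mono)
    fix j
    show "\<bar>\<zeta>$j\<bar> \<le> \<delta>"
      using \<zeta> assms(1) assms(2)[of j] unfolding hyperplane_box_def by (cases "j = i") auto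
  qed
  finally show "\<zeta> \<in> ball 0 r \<inter> hyperplane i"
    using \<zeta> assms by (simp add: hyperplane_box_def hyperplane_def)
qed

text \<open>Cap j contributes only a phase O(|x_j| \<delta>^2) in the normal direction e_j, so the dual box
  has length about \<delta>^(-2) there, and the boxes of all other caps must be that thin in direction e_j.\<close>

definition knapp_widths :: "'n set \<Rightarrow> real \<Rightarrow> 'n \<Rightarrow> real" where
  "knapp_widths K \<delta> j = (if j \<in> K then \<delta>^2 else \<delta>)"

lemma knapp_widths_le: "0 \<le> \<delta> \<Longrightarrow> \<delta> \<le> 1 \<Longrightarrow> knapp_widths K \<delta> j \<le> \<delta>"
  by (simp add: knapp_widths_def power2_eq_square mult_left_le)

lemma prod_knapp_widths:
  fixes K :: "'n::finite set"
  shows "(\<Prod>j\<in>UNIV. knapp_widths K \<delta> j) = \<delta>^(CARD('n) + card K)"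
proof -
  have "(\<Prod>j\<in>UNIV. knapp_widths K \<delta> j) = (\<Prod>j\<in>K. \<delta>^2) * (\<Prod>j\<in>UNIV - K. \<delta>)"
    unfolding knapp_widths_def by (simp add: prod.If_cases Int_UNIV_left Diff_eq)
  also have "\<dots> = \<delta>^(2 * card K + (CARD('n) - card K))"
    by (simp add: card_Diff_subset power_mult power_add)
  also have "2 * card K + (CARD('n) - card K) = CARD('n) + card K"
    using card_mono[of UNIV K] by simp
  finally show ?thesis .
qed

lemma prod_knapp_widths_remove:
  fixes K :: "'n::finite set"
  assumes "i \<in> K" "0 < \<delta>"
  shows "(\<Prod>j\<in>UNIV-{i}. 2 * knapp_widths K \<delta> j) = 2^(CARD('n) - 1) * \<delta>^(CARD('n) + card K - 2)"
proof -
  have "(2 * \<delta>^2) * (\<Prod>j\<in>UNIV-{i}. 2 * knapp_widths K \<delta> j) = (\<Prod>j\<in>UNIV. 2 * knapp_widths K \<delta> j)"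
    using assms by (simp add: prod.remove[of UNIV i] knapp_widths_def)
  also have "\<dots> = 2^CARD('n) * \<delta>^(CARD('n) + card K)"
    by (simp add: prod.distrib prod_knapp_widths)
  also have "\<dots> = (2 * \<delta>^2) * (2^(CARD('n) - 1) * \<delta>^(CARD('n) + card K - 2))"
  proof -
    have "card K > 0" using assms by (auto simp: card_gt_0_iff)
    then obtain m where "card K = Suc m" using gr0_implies_Suc by blast
    moreover obtain n where "CARD('n) = Suc n" using gr0_implies_Suc[of "CARD('n)"] by auto
    ultimately show ?thesis by (simp add: power2_eq_square)
  qed
  finally show ?thesis using assms by simp
qed

definition knapp_dual_box :: "'n::finite set \<Rightarrow> real \<Rightarrow> (real^'n) set" where
  "knapp_dual_box K \<delta> = {x. \<forall>j. \<bar>x$j\<bar> * knapp_widths K \<delta> j \<le> 1 / (2 * real CARD('n))}"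

lemma knapp_dual_box_eq:
  assumes "0 < \<delta>"
  shows "knapp_dual_box K \<delta>
    = {x::real^'n::finite. \<forall>j. \<bar>x$j\<bar> \<le> 1 / (2 * real CARD('n)) / knapp_widths K \<delta> j}"
  using assms by (simp add: knapp_dual_box_def knapp_widths_def pos_le_divide_eq mult_ac)

lemma emeasure_knapp_dual_box:
  fixes K :: "'n::finite set"
  assumes "0 < \<delta>"
  shows "emeasure lborel (knapp_dual_box K \<delta>)
    = ennreal ((1 / real CARD('n))^CARD('n) / \<delta>^(CARD('n) + card K))"
proof -
  define c where "c = 1 / (2 * real CARD('n))"
  have a: "0 < knapp_widths K \<delta> j" for j using assms by (simp add: knapp_widths_def)
  have "emeasure lborel (knapp_dual_box K \<delta>) = ennreal (\<Prod>j\<in>UNIV. 2 * (c / knapp_widths K \<delta> j))"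
    unfolding knapp_dual_box_eq[OF assms] c_def[symmetric]
    using a by (intro emeasure_lborel_abs_le_box) (simp add: c_def less_imp_le)
  also have "(\<Prod>j\<in>UNIV. 2 * (c / knapp_widths K \<delta> j))
      = (\<Prod>j\<in>(UNIV::'n set). 2 * c) / (\<Prod>j\<in>UNIV. knapp_widths K \<delta> j)"
    using prod_dividef[of "\<lambda>_. 2 * c" "knapp_widths K \<delta>" UNIV] by simp
  finally show ?thesis by (simp add: prod_knapp_widths c_def)
qed

lemma abs_sphere_phase_knapp_le:
  fixes K :: "'n::finite set"
  assumes i: "i \<in> K" and \<delta>: "0 < \<delta>" "real CARD('n) * \<delta> \<le> 1"
    and x: "x \<in> knapp_dual_box K \<delta>" and \<xi>: "\<xi> \<in> hyperplane_box i (knapp_widths K \<delta>)"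
  shows "\<bar>sphere_phase i x \<xi>\<bar> \<le> 1"
proof -
  define N where "N = real CARD('n)"
  define a where "a = knapp_widths K \<delta>"
  have N: "1 \<le> N" unfolding N_def by simp
  have xa: "\<bar>x$j\<bar> * a j \<le> 1 / (2 * N)" for j using x by (simp add: knapp_dual_box_def a_def N_def)
  have card_le: "real (card (UNIV - {i})) \<le> N" unfolding N_def by (simp add: card_mono)
  have N\<delta>: "N * \<delta> \<le> 1" using \<delta> by (simp add: N_def)
  moreover have "\<delta> \<le> N * \<delta>" using mult_right_mono[OF N, of \<delta>] \<delta> by simp
  ultimately have "\<delta> \<le> 1" by linarith
  then have "(a j)^2 \<le> \<delta>^2" for j
    using \<delta> knapp_widths_le[of \<delta> K j] by (intro power_mono) (auto simp: a_def knapp_widths_def)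
  then have sum_sq: "(\<Sum>l\<in>UNIV-{i}. (a l)^2) \<le> N * \<delta>^2"
    using sum_mono[of "UNIV-{i}" "\<lambda>l. (a l)^2" "\<lambda>_. \<delta>^2"] mult_right_mono[OF card_le, of "\<delta>^2"]
    by simp
  have "\<bar>x$i\<bar> * (\<Sum>l\<in>UNIV-{i}. (a l)^2) \<le> \<bar>x$i\<bar> * (N * \<delta>^2)"
    using sum_sq by (intro mult_left_mono) auto
  also have "\<dots> \<le> 1/2"
    using xa[of i] i N by (simp add: a_def knapp_widths_def field_simps)
  finally have normal: "\<bar>x$i\<bar> * (\<Sum>l\<in>UNIV-{i}. (a l)^2) \<le> 1/2" .
  have "(\<Sum>j\<in>UNIV-{i}. \<bar>x$j\<bar> * a j) \<le> real (card (UNIV - {i})) * (1 / (2 * N))"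
    using sum_mono[of "UNIV-{i}" "\<lambda>j. \<bar>x$j\<bar> * a j" "\<lambda>_. 1 / (2 * N)"] xa by simp
  also have "\<dots> \<le> N * (1 / (2 * N))" using card_le N by (intro mult_right_mono) auto
  finally have tangential: "(\<Sum>j\<in>UNIV-{i}. \<bar>x$j\<bar> * a j) \<le> 1/2" using N by simp
  have "N * \<delta>^2 \<le> \<delta>"
    using \<delta> mult_right_mono[OF N\<delta>, of \<delta>] by (simp add: power2_eq_square mult.assoc)
  with sum_sq \<open>\<delta> \<le> 1\<close> have "(\<Sum>l\<in>UNIV-{i}. (a l)^2) \<le> 1" by linarith
  from abs_sphere_phase_le[OF \<xi>[folded a_def] this, of x] normal tangential
  show ?thesis by linarith
qed

lemma norm_extension_op_knapp_ge:
  fixes K :: "'n::finite set"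
  assumes i: "i \<in> K" and \<delta>: "0 < \<delta>" "real CARD('n) * \<delta> \<le> 1"
    and box_U: "hyperplane_box i (knapp_widths K \<delta>) \<subseteq> U" and x: "x \<in> knapp_dual_box K \<delta>"
  shows "2^(CARD('n) - 1) * \<delta>^(CARD('n) + card K - 2) / 2
    \<le> norm (extension_op i U (indicator (hyperplane_box i (knapp_widths K \<delta>))) x)"
proof -
  have "0 \<le> knapp_widths K \<delta> j" for j using \<delta> by (simp add: knapp_widths_def)
  from norm_extension_op_indicator_hyperplane_box_ge[OF this box_U
      abs_sphere_phase_knapp_le[OF i \<delta> x]]
  show ?thesis by (simp add: prod_knapp_widths_remove[OF i \<delta>(1)])
qed

lemma nn_integral_extension_knapp_ge:
  fixes K :: "'n::finite set" and U :: "'n \<Rightarrow> (real^'n) set"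
  assumes \<delta>: "0 < \<delta>" "real CARD('n) * \<delta> \<le> 1" and p: "0 \<le> p"
    and box_U: "\<And>i. i \<in> K \<Longrightarrow> hyperplane_box i (knapp_widths K \<delta>) \<subseteq> U i"
  shows "ennreal (((2^(CARD('n) - 1) * \<delta>^(CARD('n) + card K - 2) / 2)^card K) powr p
            * ((1 / real CARD('n))^CARD('n) / \<delta>^(CARD('n) + card K)))
    \<le> (\<integral>\<^sup>+ x. ennreal (norm (\<Prod>i\<in>K. extension_op i (U i)
            (indicator (hyperplane_box i (knapp_widths K \<delta>))) x) powr p) \<partial>lborel)"
    (is "ennreal (?V * ?W) \<le> (\<integral>\<^sup>+ x. ennreal (?F x) \<partial>lborel)")
proof -
  define X where "X = knapp_dual_box K \<delta>"
  define m where "m = 2^(CARD('n) - 1) * \<delta>^(CARD('n) + card K - 2)"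
  have "ennreal ?V * indicator X x \<le> ennreal (?F x)" for x
  proof (cases "x \<in> X")
    case True
    have "(m / 2)^card K = (\<Prod>i\<in>K. m / 2)" by simp
    also have "\<dots> \<le> (\<Prod>i\<in>K. norm (extension_op i (U i) (indicator (hyperplane_box i (knapp_widths K \<delta>))) x))"
      using norm_extension_op_knapp_ge[OF _ \<delta> box_U] True \<delta>
      by (intro prod_mono) (simp add: m_def X_def)
    finally have "?V \<le> ?F x"
      using p \<delta> by (simp add: m_def prod_norm powr_mono2)
    then show ?thesis using True by simp
  qed simp
  then have "ennreal ?V * emeasure lborel X \<le> (\<integral>\<^sup>+ x. ennreal (?F x) \<partial>lborel)"
    by (subst nn_integral_cmult_indicator[symmetric])
      (auto simp: X_def knapp_dual_box_eq[OF \<delta>(1)] abs_le_box_eq_cbox intro: nn_integral_mono)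
  moreover have "ennreal (?V * ?W) = ennreal ?V * ennreal ?W"
    using \<delta> by (intro ennreal_mult) auto
  ultimately show ?thesis by (simp add: X_def emeasure_knapp_dual_box[OF \<delta>(1)])
qed

lemma knapp_example_inequality:
  fixes K :: "'n::finite set" and U :: "'n \<Rightarrow> (real^'n) set"
  assumes estimate: "\<forall>f :: 'n \<Rightarrow> real^'n \<Rightarrow> complex.
            (\<forall>i\<in>K. in_L2 i (U i) (f i)) \<longrightarrow>
            (\<integral>\<^sup>+ x. ennreal (norm (\<Prod>i\<in>K. extension_op i (U i) (f i) x) powr p) \<partial>lborel)
              \<le> ennreal ((C * (\<Prod>i\<in>K. L2_norm_on i (U i) (f i))) powr p)"
    and p: "0 \<le> p" and U: "\<And>i. i \<in> K \<Longrightarrow> ball 0 r \<inter> hyperplane i \<subseteq> U i" and "r \<le> 1"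
    and \<delta>: "0 < \<delta>" "real CARD('n) * \<delta> < r"
  shows "((2^(CARD('n) - 1) * \<delta>^(CARD('n) + card K - 2) / 2)^card K) powr p
            * ((1 / real CARD('n))^CARD('n) / \<delta>^(CARD('n) + card K))
         \<le> (C * sqrt (2^(CARD('n) - 1) * \<delta>^(CARD('n) + card K - 2))^card K) powr p"
proof -
  define f :: "'n \<Rightarrow> real^'n \<Rightarrow> complex"
    where "f i = indicator (hyperplane_box i (knapp_widths K \<delta>))" for i
  have "\<delta> \<le> real CARD('n) * \<delta>" using \<delta> by simp
  with \<delta> \<open>r \<le> 1\<close> have "\<delta> \<le> 1" by linarith
  then have box_U: "hyperplane_box i (knapp_widths K \<delta>) \<subseteq> U i" if "i \<in> K" for i
    using hyperplane_box_subset_ball[of \<delta> "knapp_widths K \<delta>" r i] knapp_widths_le[of \<delta> K] \<delta> U[OF that]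
    by fastforce
  have a_nonneg: "\<And>j. 0 \<le> knapp_widths K \<delta> j" using \<delta> by (simp add: knapp_widths_def)
  note boxes = in_L2_indicator_hyperplane_box[OF a_nonneg box_U]
    L2_norm_on_indicator_hyperplane_box[OF a_nonneg box_U]
  have "ennreal (((2^(CARD('n) - 1) * \<delta>^(CARD('n) + card K - 2) / 2)^card K) powr p
            * ((1 / real CARD('n))^CARD('n) / \<delta>^(CARD('n) + card K)))
      \<le> (\<integral>\<^sup>+ x. ennreal (norm (\<Prod>i\<in>K. extension_op i (U i) (f i) x) powr p) \<partial>lborel)"
    unfolding f_def using \<delta> \<open>r \<le> 1\<close> p box_U by (intro nn_integral_extension_knapp_ge) auto
  also have "\<dots> \<le> ennreal ((C * (\<Prod>i\<in>K. L2_norm_on i (U i) (f i))) powr p)"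
    using boxes(1) estimate by (simp add: f_def)
  also have "(\<Prod>i\<in>K. L2_norm_on i (U i) (f i))
      = sqrt (2^(CARD('n) - 1) * \<delta>^(CARD('n) + card K - 2))^card K"
    using boxes(2) prod_knapp_widths_remove[where K = K] \<delta> by (simp add: f_def cong: prod.cong)
  finally show ?thesis by simp
qed

lemma knapp_scaling_contradiction:
  fixes L k d :: nat and p C \<mu> \<gamma> \<eta> :: real
  assumes C: "0 \<le> C" and \<mu>: "0 < \<mu>" and \<gamma>: "0 < \<gamma>" and "0 < \<eta>"
    and exponent: "real L * real k * p / 2 < real d"
    and bound: "\<And>\<delta>. 0 < \<delta> \<Longrightarrow> \<delta> < \<eta> \<Longrightarrow>
      ((\<mu> * \<delta>^L / 2)^k) powr p * (\<gamma> / \<delta>^d) \<le> (C * sqrt (\<mu> * \<delta>^L)^k) powr p"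
  shows False
proof -
  define e where "e = real d - real L * real k * p / 2"
  define \<alpha> where "\<alpha> = (\<mu> / 2) powr (real k * p) * \<gamma>"
  define \<beta> where "\<beta> = C powr p * \<mu> powr (real k * p / 2)"
  have "\<alpha> \<le> \<beta> * \<delta> powr e" if \<delta>: "0 < \<delta>" "\<delta> < \<eta>" for \<delta>
  proof -
    have "((\<mu> * \<delta>^L / 2)^k) powr p = ((\<mu> / 2) * \<delta> powr L) powr (real k * p)"
      using \<delta> \<mu> by (simp add: powr_realpow[symmetric] powr_powr)
    also have "\<dots> = (\<mu> / 2) powr (real k * p) * \<delta> powr (real L * real k * p)"
      by (simp only: powr_mult powr_powr mult.assoc)
    finally have "((\<mu> * \<delta>^L / 2)^k) powr p
        = (\<mu> / 2) powr (real k * p) * \<delta> powr (real L * real k * p)" .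
    moreover have "\<gamma> / \<delta>^d = \<gamma> * \<delta> powr (- real d)"
      using \<delta> by (simp add: powr_minus powr_realpow divide_inverse)
    ultimately have lhs: "((\<mu> * \<delta>^L / 2)^k) powr p * (\<gamma> / \<delta>^d)
        = \<alpha> * (\<delta> powr (real L * real k * p) * \<delta> powr (- real d))"
      by (simp only: \<alpha>_def mult_ac)
    have "sqrt (\<mu> * \<delta>^L)^k = (\<mu> * \<delta> powr L) powr (real k / 2)"
      using \<delta> \<mu> by (simp add: powr_half_sqrt[symmetric] powr_realpow[symmetric] powr_powr)
    also have "\<dots> = \<mu> powr (real k / 2) * \<delta> powr (real L * real k / 2)"
      by (simp add: powr_mult powr_powr)
    finally have rhs: "(C * sqrt (\<mu> * \<delta>^L)^k) powr p = \<beta> * \<delta> powr (real L * real k * p / 2)"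
      using \<delta> \<mu> C by (simp add: \<beta>_def powr_mult powr_powr mult_ac)
    have "\<alpha> * (\<delta> powr (real L * real k * p) * \<delta> powr (- real d))
        \<le> \<beta> * \<delta> powr e * (\<delta> powr (real L * real k * p) * \<delta> powr (- real d))"
      using bound[OF \<delta>] \<delta> unfolding lhs rhs by (simp add: e_def powr_add[symmetric] mult_ac)
    then show ?thesis
      using \<delta> by (simp add: mult_le_cancel_right)
  qed
  then have "\<alpha> \<le> 0"
    using exponent \<open>0 < \<eta>\<close> by (intro nonpos_if_le_mult_powr_near_zero[where e=e]) (auto simp: e_def)
  moreover have "0 < \<alpha>" using \<mu> \<gamma> by (simp add: \<alpha>_def)
  ultimately show False by simp
qed

theorem mainTheorem9:
  fixes K :: "'n::finite set"
    and U :: "'n \<Rightarrow> (real^'n) set"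
    and p :: real
  assumes n_ge: "CARD('n) \<ge> 2"
    and K_ne: "K \<noteq> {}"
    and p_pos: "0 < p"
    and p_lt: "p < 2 * (real CARD('n) + real (card K)) /
                   (real (card K) * (real CARD('n) + real (card K) - 2))"
    and U_open: "\<forall>i\<in>K. openin (top_of_set (hyperplane i)) (U i)"
    and U_zero: "\<forall>i\<in>K. 0 \<in> U i"
    and U_small: "\<forall>i\<in>K. U i \<subseteq> ball 0 1"
  shows "\<not> (\<exists>C\<ge>0. \<forall>f :: 'n \<Rightarrow> real^'n \<Rightarrow> complex.
            (\<forall>i\<in>K. in_L2 i (U i) (f i)) \<longrightarrow>
            (\<integral>\<^sup>+ x. ennreal (norm (\<Prod>i\<in>K. extension_op i (U i) (f i) x) powr p) \<partial>lborel)
              \<le> ennreal ((C * (\<Prod>i\<in>K. L2_norm_on i (U i) (f i))) powr p))"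
proof (intro notI, elim exE conjE)
  fix C :: real
  assume "0 \<le> C" and estimate: "\<forall>f :: 'n \<Rightarrow> real^'n \<Rightarrow> complex.
            (\<forall>i\<in>K. in_L2 i (U i) (f i)) \<longrightarrow>
            (\<integral>\<^sup>+ x. ennreal (norm (\<Prod>i\<in>K. extension_op i (U i) (f i) x) powr p) \<partial>lborel)
              \<le> ennreal ((C * (\<Prod>i\<in>K. L2_norm_on i (U i) (f i))) powr p)"
  obtain r where r: "0 < r" "r \<le> 1" "\<And>i. i \<in> K \<Longrightarrow> ball 0 r \<inter> hyperplane i \<subseteq> U i"
    using uniform_ball_in_openin[of K hyperplane U 0] U_open U_zero by auto
  define N k where "N = CARD('n)" and "k = card K"
  have "0 < k" using K_ne by (simp add: k_def card_gt_0_iff)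
  with n_ge have "0 < real k * real (N + k - 2)" by (simp add: N_def)
  then have exponent: "real (N + k - 2) * real k * p / 2 < real (N + k)"
    using p_lt n_ge by (simp add: N_def k_def of_nat_diff pos_less_divide_eq mult_ac)
  show False
  proof (rule knapp_scaling_contradiction[OF \<open>0 \<le> C\<close> _ _ _ exponent])
    fix \<delta> :: real assume "0 < \<delta>" "\<delta> < r / real N"
    then show "((2^(N - 1) * \<delta>^(N + k - 2) / 2)^k) powr p * ((1 / real N)^N / \<delta>^(N + k))
        \<le> (C * sqrt (2^(N - 1) * \<delta>^(N + k - 2))^k) powr p"
      using knapp_example_inequality[OF estimate _ r(3) r(2)] p_pos
      by (simp add: N_def k_def pos_less_divide_eq mult.commute)
  qed (use r in \<open>auto simp: N_def\<close>)
qed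

end
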